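(* On $V_N$ (with the $H_n(N/n)$-action $\zeta_N$) one has $\mathbf h=H$, $\mathbf e=\frac NnE$, $\mathbf f=\frac nNF$, where $\mathbf h=\frac12\sum_i(\mathrm x_i\mathrm y_i+\mathrm y_i\mathrm x_i)$, $\mathbf e=\frac12\sum_i\mathrm y_i^2$, $\mathbf f=\frac12\sum_i\mathrm x_i^2$, and $H=\sum_pb_p\frac{\partial}{\partial b_p}+\frac{\dim\mathfrak g}2$, $F=\frac12\sum_pb_p^2$, $E=\frac12\Delta_{\mathfrak g}$ act on the $\mathbb C[\mathfrak g]$ factor.
   Context: $N$ divides $n$, $\mathfrak g=\mathfrak{sl}_N(\mathbb C)$, $V_N=(\mathbb C[\mathfrak g]\otimes(\mathbb C^N)^{\otimes n})^{\mathfrak g}$. $\{b_p\}$ is an orthonormal basis of $\mathfrak g$ for the trace form; $b_p$ also denotes the corresponding linear coordinate function (multiplication operator) on $\mathfrak g$, $\partial/\partial b_p$ the directional derivative, and $\Delta_{\mathfrak g}=\sum_p\partial^2/\partial b_p^2$ the Laplacian. $H_n(k)$ is the rational Cherednik algebra of type $A_{n-1}$ (quotient of $\mathbb C[S_n]\ltimes\mathbb C\langle\mathrm x_i,\mathrm y_i\rangle$ by $\sum\mathrm x_i=\sum\mathrm y_i=0$, $[\mathrm x_i,\mathrm x_j]=[\mathrm y_i,\mathrm y_j]=0$, $[\mathrm x_i,\mathrm y_j]=\frac1n-ks_{ij}$ for $i\ne j$), acting on $V_N$ via $\zeta_N$: $s_{ij}$ permutes tensor factors, $(\mathrm x_if)(A)=A_if(A)$,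 $(\mathrm y_if)(A)=\frac Nn\sum_p(b_p)_i\frac{\partial f}{\partial b_p}(A)$, where $B_i$ is $B$ acting on the $i$-th factor of $(\mathbb C^N)^{\otimes n}$. *)

theory Defs
  imports "HOL-Analysis.Analysis"
begin

text \<open>N x N complex matrices are functions nat => nat => complex (indices < N);
 tensors in (C^N)^{tensor n} are functions on index lists w (length n, entries < N);
 elements of C[g] tensor (C^N)^{tensor n} are functions from matrices to tensors.\<close>

type_synonym mat = "nat \<Rightarrow> nat \<Rightarrow> complex"
type_synonym tens = "nat list \<Rightarrow> complex"

definition mat_mult :: "nat \<Rightarrow> mat \<Rightarrow> mat \<Rightarrow> mat" where
  "mat_mult N A B = (\<lambda>i j. \<Sum>k<N. A i k * B k j)"

definition mtrace :: "nat \<Rightarrow> mat \<Rightarrow> complex" where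
  "mtrace N A = (\<Sum>i<N. A i i)"

definition in_sl :: "nat \<Rightarrow> mat \<Rightarrow> bool" where
  "in_sl N A \<longleftrightarrow> mtrace N A = 0 \<and> (\<forall>i j. (N \<le> i \<or> N \<le> j) \<longrightarrow> A i j = 0)"

definition lie_br :: "nat \<Rightarrow> mat \<Rightarrow> mat \<Rightarrow> mat" where
  "lie_br N X A = (\<lambda>i j. mat_mult N X A i j - mat_mult N A X i j)"

definition valid_idx :: "nat \<Rightarrow> nat \<Rightarrow> nat list \<Rightarrow> bool" where
  "valid_idx N n w \<longleftrightarrow> length w = n \<and> (\<forall>x\<in>set w. x < N)"

text \<open>B_i: the matrix B acting on the i-th tensor factor (factors indexed 0..n-1)\<close>
definition act_factor :: "nat \<Rightarrow> nat \<Rightarrow> mat \<Rightarrow> tens \<Rightarrow> tens" where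
  "act_factor N i B T = (\<lambda>w. \<Sum>k<N. B (w ! i) k * T (w[i := k]))"

definition dderiv :: "mat \<Rightarrow> (mat \<Rightarrow> tens) \<Rightarrow> mat \<Rightarrow> tens" where
  "dderiv v F = (\<lambda>A w. deriv (\<lambda>t. F (\<lambda>i j. A i j + t * v i j) w) 0)"

inductive poly_fun :: "nat \<Rightarrow> (mat \<Rightarrow> complex) \<Rightarrow> bool" for N where
  pf_const: "poly_fun N (\<lambda>A. c)"
| pf_coord: "i < N \<Longrightarrow> j < N \<Longrightarrow> poly_fun N (\<lambda>A. A i j)"
| pf_add: "poly_fun N f \<Longrightarrow> poly_fun N g \<Longrightarrow> poly_fun N (\<lambda>A. f A + g A)"
| pf_mult: "poly_fun N f \<Longrightarrow> poly_fun N g \<Longrightarrow> poly_fun N (\<lambda>A. f A * g A)"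

text \<open>V_N = (C[g] tensor (C^N)^{tensor n})^g, g = sl_N, invariance under the Lie algebra
 (differentiated form of F(g A g^-1) = g^{tensor n} F(A)).\<close>
definition V :: "nat \<Rightarrow> nat \<Rightarrow> (mat \<Rightarrow> tens) set" where
  "V N n = {F. (\<forall>w. poly_fun N (\<lambda>A. F A w))
      \<and> (\<forall>A w. \<not> valid_idx N n w \<longrightarrow> F A w = 0)
      \<and> (\<forall>X A w. in_sl N X \<longrightarrow> in_sl N A \<longrightarrow> valid_idx N n w \<longrightarrow>
            dderiv (lie_br N X A) F A w = (\<Sum>i<n. act_factor N i X (F A) w))}"

definition dim_sl :: "nat \<Rightarrow> nat" where
  "dim_sl N = N\<^sup>2 - 1"

definition onb :: "nat \<Rightarrow> (nat \<Rightarrow> mat) \<Rightarrow> bool" where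
  "onb N b \<longleftrightarrow> (\<forall>p<dim_sl N. in_sl N (b p)) \<and>
     (\<forall>p<dim_sl N. \<forall>q<dim_sl N. mtrace N (mat_mult N (b p) (b q)) = (if p = q then 1 else 0))"

text \<open>coordinate function b_p(A) = tr(b_p A)\<close>
definition coord :: "nat \<Rightarrow> mat \<Rightarrow> mat \<Rightarrow> complex" where
  "coord N B A = mtrace N (mat_mult N B A)"

definition xop :: "nat \<Rightarrow> nat \<Rightarrow> (mat \<Rightarrow> tens) \<Rightarrow> (mat \<Rightarrow> tens)" where
  "xop N i F = (\<lambda>A w. act_factor N i A (F A) w)"

definition yop :: "nat \<Rightarrow> nat \<Rightarrow> (nat \<Rightarrow> mat) \<Rightarrow> nat \<Rightarrow> (mat \<Rightarrow> tens) \<Rightarrow> (mat \<Rightarrow> tens)" where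
  "yop N n b i F = (\<lambda>A w. (of_nat N / of_nat n) *
      (\<Sum>p<dim_sl N. act_factor N i (b p) (dderiv (b p) F A) w))"

definition hbold where
  "hbold N n b F = (\<lambda>A w. (1/2) * (\<Sum>i<n. xop N i (yop N n b i F) A w + yop N n b i (xop N i F) A w))"

definition ebold where
  "ebold N n b F = (\<lambda>A w. (1/2) * (\<Sum>i<n. yop N n b i (yop N n b i F) A w))"

definition fbold where
  "fbold N n F = (\<lambda>A w. (1/2) * (\<Sum>i<n. xop N i (xop N i F) A w))"

definition Hop where
  "Hop N b F = (\<lambda>A w. (\<Sum>p<dim_sl N. coord N (b p) A * dderiv (b p) F A w)
      + (of_nat (dim_sl N) / 2) * F A w)"

definition Eop where
  "Eop N b F = (\<lambda>A w. (1/2) * (\<Sum>p<dim_sl N. dderiv (b p) (dderiv (b p) F) A w))"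

definition Fop where
  "Fop N b F = (\<lambda>A w. (1/2) * (\<Sum>p<dim_sl N. (coord N (b p) A)\<^sup>2) * F A w)"

end

theory Submission
  imports "Jordan_Normal_Form.Determinant" Defs
begin

(* The three identities follow from the invariance condition defining V_N, which extends from
   sl_N to all N x N matrices Y: since Y - (tr Y / N) I is traceless and has the same bracket
   with A,
     sum_i Y_i F(A) = d_[Y,A] F(A) + (n tr Y / N) F(A).
   Taking Y = A^2, for which [Y,A] = 0, gives f. Differentiating once in the direction b_p,
   taking Y = A b_p + b_p A and summing over p gives h; differentiating twice in the directions
   b_p, b_q, taking Y = b_p b_q and summing over p, q gives e. The remaining terms are evaluated
   with the completeness relation
     sum_p (b_p)_ab (b_p)_cd = delta_ad delta_bc - delta_ab delta_cd / N
   of the orthonormal basis: they cancel in pairs, or they pair a skew-symmetric (resp.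
   cyclically alternating) coefficient with a symmetric higher derivative of F. *)

lemma sum_if_cond_const:
  "(\<Sum>k\<in>S. if P then f k else 0) = (if P then (\<Sum>k\<in>S. f k) else (0::'a::comm_monoid_add))"
  by simp

lemma sum_skew_mult_sym_eq_0:
  fixes s D :: "'b \<Rightarrow> 'b \<Rightarrow> 'a::comm_ring"
  assumes "\<And>p r. D p r = D r p"
  shows "(\<Sum>p\<in>S. \<Sum>r\<in>S. (s r p - s p r) * D p r) = 0"
proof -
  have "(\<Sum>p\<in>S. \<Sum>r\<in>S. s p r * D p r) = (\<Sum>r\<in>S. \<Sum>p\<in>S. s p r * D r p)"
    using assms by (subst sum.swap) simp
  then show ?thesis
    by (simp add: left_diff_distrib sum_subtractf)
qed

lemma sum_cyclic_diff_mult_cyclic_eq_0: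
  fixes t D :: "'b \<Rightarrow> 'b \<Rightarrow> 'b \<Rightarrow> 'a::comm_ring"
  assumes "\<And>p q r. D q r p = D p q r"
  shows "(\<Sum>p\<in>S. \<Sum>q\<in>S. \<Sum>r\<in>S. (t r p q - t p q r) * D p q r) = 0"
proof -
  have "(\<Sum>p\<in>S. \<Sum>q\<in>S. \<Sum>r\<in>S. t p q r * D p q r)
      = (\<Sum>p\<in>S. \<Sum>q\<in>S. \<Sum>r\<in>S. t p q r * D q r p)"
    using assms by simp
  also have "\<dots> = (\<Sum>q\<in>S. \<Sum>r\<in>S. \<Sum>p\<in>S. t p q r * D q r p)"
    by (subst sum.swap) (intro sum.cong refl sum.swap)
  finally show ?thesis
    by (simp add: left_diff_distrib sum_subtractf)
qed

lemma pair_index_less: "i < N \<Longrightarrow> j < N \<Longrightarrow> i * N + j < N * (N::nat)"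
proof -
  assume "i < N" "j < N"
  then have "i * N + j < (i + 1) * N" and "(i + 1) * N \<le> N * N"
    by (simp, intro mult_right_mono) auto
  then show ?thesis by linarith
qed

lemma sum_lessThan_square_div_mod:
  fixes g :: "nat \<Rightarrow> nat \<Rightarrow> 'a::comm_monoid_add"
  shows "(\<Sum>x<N * N. g (x div N) (x mod N)) = (\<Sum>i<N. \<Sum>j<N. g i j)"
proof -
  have "bij_betw (\<lambda>(i, j). i * N + j) ({..<N} \<times> {..<N}) {..<N * N}"
  proof (rule bij_betwI[where g = "\<lambda>x. (x div N, x mod N)"])
    show "(\<lambda>(i, j). i * N + j) \<in> {..<N} \<times> {..<N} \<rightarrow> {..<N * N}"
      by (auto intro: pair_index_less)
    show "(\<lambda>x. (x div N, x mod N)) \<in> {..<N * N} \<rightarrow> {..<N} \<times> {..<N}"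
      by (auto simp: less_mult_imp_div_less intro!: mod_less_divisor Nat.gr0I)
  qed auto
  then have "(\<Sum>x<N * N. g (x div N) (x mod N)) = (\<Sum>(i, j)\<in>{..<N} \<times> {..<N}. g i j)"
    by (subst sum.reindex_bij_betw[symmetric]) (auto intro!: sum.cong)
  then show ?thesis
    by (simp add: sum.cartesian_product)
qed

section \<open>Matrices\<close>

definition in_gl :: "nat \<Rightarrow> mat \<Rightarrow> bool" where
  "in_gl N A \<longleftrightarrow> (\<forall>i j. N \<le> i \<or> N \<le> j \<longrightarrow> A i j = 0)"

definition id_mat :: "nat \<Rightarrow> mat" where
  "id_mat N = (\<lambda>i j. if i = j \<and> i < N then 1 else 0)"

definition sl_part :: "nat \<Rightarrow> mat \<Rightarrow> mat" where
  "sl_part N Y = (\<lambda>i j. Y i j - mtrace N Y / of_nat N * id_mat N i j)"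

lemma in_sl_imp_in_gl: "in_sl N A \<Longrightarrow> in_gl N A"
  by (simp add: in_sl_def in_gl_def)

lemma in_glD: "in_gl N A \<Longrightarrow> \<not> (i < N \<and> j < N) \<Longrightarrow> A i j = 0"
  by (auto simp: in_gl_def)

lemma in_gl_mat_mult: "in_gl N A \<Longrightarrow> in_gl N B \<Longrightarrow> in_gl N (mat_mult N A B)"
  by (auto simp: in_gl_def mat_mult_def)

lemma in_gl_add: "in_gl N A \<Longrightarrow> in_gl N B \<Longrightarrow> in_gl N (\<lambda>i j. A i j + B i j)"
  by (simp add: in_gl_def)

lemma in_gl_id_mat: "in_gl N (id_mat N)"
  by (simp add: in_gl_def id_mat_def)

lemma in_sl_iff_in_gl: "in_sl N A \<longleftrightarrow> in_gl N A \<and> mtrace N A = 0"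
  by (auto simp: in_sl_def in_gl_def)

lemma mat_mult_assoc: "mat_mult N (mat_mult N A B) C = mat_mult N A (mat_mult N B C)"
proof (intro ext)
  fix i j
  have "mat_mult N (mat_mult N A B) C i j = (\<Sum>k<N. \<Sum>l<N. A i l * B l k * C k j)"
    by (simp add: mat_mult_def sum_distrib_right)
  also have "\<dots> = (\<Sum>l<N. \<Sum>k<N. A i l * B l k * C k j)"
    by (rule sum.swap)
  finally show "mat_mult N (mat_mult N A B) C i j = mat_mult N A (mat_mult N B C) i j"
    by (simp add: mat_mult_def sum_distrib_left mult.assoc)
qed

lemma mtrace_mat_mult_commute: "mtrace N (mat_mult N A B) = mtrace N (mat_mult N B A)"
  unfolding mtrace_def mat_mult_def by (subst sum.swap) (simp add: mult.commute)

lemma mat_mult_id_left: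
  assumes "in_gl N B"
  shows "mat_mult N (id_mat N) B = B"
proof (intro ext)
  fix i j
  have "mat_mult N (id_mat N) B i j = (\<Sum>k<N. if k = i then B i j else 0)"
    unfolding mat_mult_def id_mat_def by (intro sum.cong) auto
  then show "mat_mult N (id_mat N) B i j = B i j"
    using in_glD[OF assms] by auto
qed

lemma mat_mult_id_right:
  assumes "in_gl N B"
  shows "mat_mult N B (id_mat N) = B"
proof (intro ext)
  fix i j
  have "mat_mult N B (id_mat N) i j = (\<Sum>k<N. if k = j then B i j else 0)"
    unfolding mat_mult_def id_mat_def by (intro sum.cong) auto
  then show "mat_mult N B (id_mat N) i j = B i j"
    using in_glD[OF assms] by auto
qed

lemma mtrace_id_mat: "mtrace N (id_mat N) = of_nat N"
  by (simp add: mtrace_def id_mat_def)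

lemma mat_mult_add_left:
  "mat_mult N (\<lambda>i j. P i j + Q i j) R = (\<lambda>i j. mat_mult N P R i j + mat_mult N Q R i j)"
  by (simp add: mat_mult_def sum.distrib distrib_right)

lemma mat_mult_add_right:
  "mat_mult N R (\<lambda>i j. P i j + Q i j) = (\<lambda>i j. mat_mult N R P i j + mat_mult N R Q i j)"
  by (simp add: mat_mult_def sum.distrib distrib_left)

lemma mat_mult_diff_left:
  "mat_mult N (\<lambda>i j. P i j - Q i j) R = (\<lambda>i j. mat_mult N P R i j - mat_mult N Q R i j)"
  by (simp add: mat_mult_def sum_subtractf left_diff_distrib)

lemma mat_mult_diff_right:
  "mat_mult N R (\<lambda>i j. P i j - Q i j) = (\<lambda>i j. mat_mult N R P i j - mat_mult N R Q i j)"
  by (simp add: mat_mult_def sum_subtractf right_diff_distrib)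

lemma mat_mult_scale_left: "mat_mult N (\<lambda>i j. c * P i j) R = (\<lambda>i j. c * mat_mult N P R i j)"
  by (simp add: mat_mult_def sum_distrib_left mult.assoc)

lemma mat_mult_scale_right: "mat_mult N R (\<lambda>i j. c * P i j) = (\<lambda>i j. c * mat_mult N R P i j)"
  by (simp add: mat_mult_def sum_distrib_left mult.left_commute)

lemma mat_mult_sum_left:
  "mat_mult N (\<lambda>i j. \<Sum>q\<in>S. P q i j) R = (\<lambda>i j. \<Sum>q\<in>S. mat_mult N (P q) R i j)"
  unfolding mat_mult_def by (simp add: sum_distrib_right, subst sum.swap, simp)

lemma mat_mult_sum_right:
  "mat_mult N R (\<lambda>i j. \<Sum>q\<in>S. P q i j) = (\<lambda>i j. \<Sum>q\<in>S. mat_mult N R (P q) i j)"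
  unfolding mat_mult_def by (simp add: sum_distrib_left, subst sum.swap, simp)

lemmas mat_mult_linear =
  mat_mult_add_left mat_mult_add_right mat_mult_diff_left mat_mult_diff_right
  mat_mult_scale_left mat_mult_scale_right mat_mult_sum_left mat_mult_sum_right

lemma mtrace_diff: "mtrace N (\<lambda>i j. P i j - Q i j) = mtrace N P - mtrace N Q"
  by (simp add: mtrace_def sum_subtractf)

lemma mtrace_scale: "mtrace N (\<lambda>i j. c * P i j) = c * mtrace N P"
  by (simp add: mtrace_def sum_distrib_left)

lemma mtrace_sum: "mtrace N (\<lambda>i j. \<Sum>q\<in>S. P q i j) = (\<Sum>q\<in>S. mtrace N (P q))"
  unfolding mtrace_def by (rule sum.swap)

lemma coord_commute: "coord N B A = coord N A B"
  by (simp add: coord_def mtrace_mat_mult_commute)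

lemma coord_scale: "coord N B (\<lambda>i j. c * P i j) = c * coord N B P"
  by (simp add: coord_def mat_mult_scale_right mtrace_scale)

lemma coord_sum: "coord N B (\<lambda>i j. \<Sum>q\<in>S. P q i j) = (\<Sum>q\<in>S. coord N B (P q))"
  by (simp add: coord_def mat_mult_sum_right mtrace_sum)

lemma lie_br_in_sl: "in_gl N X \<Longrightarrow> in_gl N A \<Longrightarrow> in_sl N (lie_br N X A)"
  unfolding in_sl_iff_in_gl lie_br_def
  by (auto simp: in_gl_def mat_mult_def mtrace_diff
      mtrace_mat_mult_commute[of N X A, unfolded mat_mult_def])

lemma lie_br_sl_part:
  assumes "in_gl N Z"
  shows "lie_br N (sl_part N Y) Z = lie_br N Y Z"
proof -
  have "lie_br N (sl_part N Y) Z = (\<lambda>i j. mat_mult N Y Z i j - mtrace N Y / of_nat N * Z i j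
      - (mat_mult N Z Y i j - mtrace N Y / of_nat N * Z i j))"
    unfolding lie_br_def sl_part_def mat_mult_diff_left mat_mult_diff_right mat_mult_scale_left
      mat_mult_scale_right mat_mult_id_left[OF assms] mat_mult_id_right[OF assms] ..
  then show ?thesis
    by (simp add: lie_br_def)
qed

lemma sl_part_in_sl:
  assumes "0 < N" and "in_gl N Y"
  shows "in_sl N (sl_part N Y)"
proof -
  have "mtrace N (sl_part N Y) = mtrace N Y - mtrace N Y / of_nat N * of_nat N"
    unfolding sl_part_def mtrace_diff mtrace_scale mtrace_id_mat ..
  then show ?thesis
    using assms by (auto simp: in_sl_iff_in_gl in_gl_def sl_part_def id_mat_def)
qed

lemma lie_br_anticommutator:
  "lie_br N (\<lambda>i j. mat_mult N A B i j + mat_mult N B A i j) A = lie_br N B (mat_mult N A A)"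
  by (simp add: lie_br_def mat_mult_linear mat_mult_assoc)

lemma lie_br_square: "lie_br N (mat_mult N A A) A = (\<lambda>i j. 0)"
  by (simp add: lie_br_def mat_mult_assoc)

section \<open>Directional derivatives of polynomial functions\<close>

definition mat_line :: "mat \<Rightarrow> complex \<Rightarrow> mat \<Rightarrow> mat" where
  "mat_line A t v = (\<lambda>i j. A i j + t * v i j)"

definition dir_deriv :: "mat \<Rightarrow> (mat \<Rightarrow> complex) \<Rightarrow> mat \<Rightarrow> complex" where
  "dir_deriv v f A = deriv (\<lambda>t. f (mat_line A t v)) 0"

lemma dderiv_eq_dir_deriv: "dderiv v F A w = dir_deriv v (\<lambda>A. F A w) A"
  by (simp add: dderiv_def dir_deriv_def mat_line_def)

lemma mat_line_0 [simp]: "mat_line A 0 v = A"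
  by (simp add: mat_line_def)

lemma in_sl_mat_line: "in_sl N A \<Longrightarrow> in_sl N v \<Longrightarrow> in_sl N (mat_line A t v)"
  by (simp add: in_sl_def mat_line_def mtrace_def sum.distrib sum_distrib_left[symmetric])

lemma lie_br_mat_line: "lie_br N X (mat_line A t v) = mat_line (lie_br N X A) t (lie_br N X v)"
  by (simp add: lie_br_def mat_line_def mat_mult_linear algebra_simps)

lemma poly_fun_differentiable_on_line:
  "poly_fun N f \<Longrightarrow> (\<lambda>t. f (mat_line A t v)) field_differentiable at 0"
  by (induction rule: poly_fun.induct) (auto simp: mat_line_def intro!: derivative_intros)

lemma has_dir_deriv:
  "poly_fun N f \<Longrightarrow> ((\<lambda>t. f (mat_line A t v)) has_field_derivative dir_deriv v f A) (at 0)"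
  unfolding dir_deriv_def
  by (rule DERIV_deriv_iff_field_differentiable[THEN iffD2, OF poly_fun_differentiable_on_line])

lemma dir_deriv_eqI:
  "((\<lambda>t. f (mat_line A t v)) has_field_derivative D) (at 0) \<Longrightarrow> dir_deriv v f A = D"
  unfolding dir_deriv_def by (rule DERIV_imp_deriv)

lemma dir_deriv_const [simp]: "dir_deriv v (\<lambda>A. c) A = 0"
  by (rule dir_deriv_eqI) simp

lemma dir_deriv_coord [simp]: "dir_deriv v (\<lambda>A. A i j) A = v i j"
  by (rule dir_deriv_eqI) (auto simp: mat_line_def intro!: derivative_eq_intros)

context
  fixes N :: nat
begin

lemma dir_deriv_add:
  "poly_fun N f \<Longrightarrow> poly_fun N g \<Longrightarrow>
    dir_deriv v (\<lambda>A. f A + g A) A = dir_deriv v f A + dir_deriv v g A"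
  by (rule dir_deriv_eqI) (intro DERIV_add has_dir_deriv)

lemma dir_deriv_mult:
  assumes "poly_fun N f" and "poly_fun N g"
  shows "dir_deriv v (\<lambda>A. f A * g A) A = dir_deriv v f A * g A + f A * dir_deriv v g A"
proof (rule dir_deriv_eqI)
  show "((\<lambda>t. f (mat_line A t v) * g (mat_line A t v)) has_field_derivative
      dir_deriv v f A * g A + f A * dir_deriv v g A) (at 0)"
    using DERIV_mult'[OF has_dir_deriv[OF assms(1)] has_dir_deriv[OF assms(2)]]
    by (simp add: algebra_simps)
qed

lemma dir_deriv_scale: "poly_fun N f \<Longrightarrow> dir_deriv v (\<lambda>A. c * f A) A = c * dir_deriv v f A"
  using dir_deriv_mult[of "\<lambda>A. c" f] by (simp add: poly_fun.pf_const)

lemma poly_fun_sum: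
  "finite S \<Longrightarrow> (\<And>k. k \<in> S \<Longrightarrow> poly_fun N (g k)) \<Longrightarrow> poly_fun N (\<lambda>A. \<Sum>k\<in>S. g k A)"
  by (induction S rule: finite_induct) (auto intro: poly_fun.intros)

lemma poly_fun_scale: "poly_fun N f \<Longrightarrow> poly_fun N (\<lambda>A. c * f A)"
  by (intro poly_fun.intros)

lemma dir_deriv_sum:
  "finite S \<Longrightarrow> (\<And>k. k \<in> S \<Longrightarrow> poly_fun N (g k)) \<Longrightarrow>
    dir_deriv v (\<lambda>A. \<Sum>k\<in>S. g k A) A = (\<Sum>k\<in>S. dir_deriv v (g k) A)"
  by (induction S rule: finite_induct) (simp_all add: dir_deriv_add poly_fun_sum)

lemma dir_deriv_lincomb:
  "finite S \<Longrightarrow> (\<And>k. k \<in> S \<Longrightarrow> poly_fun N (g k)) \<Longrightarrow>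
    dir_deriv v (\<lambda>A. \<Sum>k\<in>S. c k * g k A) A = (\<Sum>k\<in>S. c k * dir_deriv v (g k) A)"
  by (simp add: dir_deriv_sum dir_deriv_scale poly_fun_scale)

lemma poly_fun_dir_deriv: "poly_fun N f \<Longrightarrow> poly_fun N (dir_deriv v f)"
proof (induction rule: poly_fun.induct)
  case (pf_add f g)
  then show ?case
    by (simp add: dir_deriv_add poly_fun.pf_add)
next
  case (pf_mult f g)
  then show ?case
    by (simp add: dir_deriv_mult poly_fun.pf_add poly_fun.pf_mult)
qed (simp_all add: poly_fun.pf_const)

lemma dir_deriv_mat_line_dir:
  "poly_fun N f \<Longrightarrow> dir_deriv (mat_line u c v) f A = dir_deriv u f A + c * dir_deriv v f A"
proof (induction rule: poly_fun.induct)
  case (pf_add f g)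
  then show ?case
    by (simp add: dir_deriv_add algebra_simps)
next
  case (pf_mult f g)
  then show ?case
    by (simp add: dir_deriv_mult algebra_simps)
qed (simp_all add: mat_line_def)

lemma dir_deriv_zero_dir: "poly_fun N f \<Longrightarrow> dir_deriv (\<lambda>i j. 0) f A = 0"
  using dir_deriv_mat_line_dir[of f "\<lambda>i j. 0" 1 "\<lambda>i j. 0" A] by (simp add: mat_line_def)

lemma dir_deriv_lincomb_dir:
  "finite S \<Longrightarrow> poly_fun N f \<Longrightarrow>
    dir_deriv (\<lambda>i j. \<Sum>q\<in>S. c q * u q i j) f A = (\<Sum>q\<in>S. c q * dir_deriv (u q) f A)"
proof (induction S rule: finite_induct)
  case (insert x S)
  have "(\<lambda>i j. \<Sum>q\<in>insert x S. c q * u q i j) = mat_line (\<lambda>i j. \<Sum>q\<in>S. c q * u q i j) (c x) (u x)"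
    using insert by (simp add: mat_line_def add.commute)
  then show ?case
    using insert by (simp add: dir_deriv_mat_line_dir)
qed (simp add: dir_deriv_zero_dir)

lemma dir_deriv_scale_dir:
  "poly_fun N f \<Longrightarrow> dir_deriv (\<lambda>i j. c * u i j) f A = c * dir_deriv u f A"
  using dir_deriv_mat_line_dir[of f "\<lambda>i j. 0" c u A] by (simp add: mat_line_def dir_deriv_zero_dir)

lemma dir_deriv_commute:
  "poly_fun N f \<Longrightarrow> dir_deriv u (dir_deriv v f) A = dir_deriv v (dir_deriv u f) A"
proof (induction arbitrary: A rule: poly_fun.induct)
  case (pf_add f g)
  have "dir_deriv v (\<lambda>A. f A + g A) = (\<lambda>A. dir_deriv v f A + dir_deriv v g A)" for v
    using pf_add.hyps by (simp add: dir_deriv_add fun_eq_iff)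
  then show ?case
    using pf_add by (simp add: dir_deriv_add poly_fun_dir_deriv)
next
  case (pf_mult f g)
  have "dir_deriv v (\<lambda>A. f A * g A) = (\<lambda>A. dir_deriv v f A * g A + f A * dir_deriv v g A)" for v
    using pf_mult.hyps by (simp add: dir_deriv_mult fun_eq_iff)
  then show ?case
    using pf_mult
    by (simp add: dir_deriv_add dir_deriv_mult poly_fun_dir_deriv poly_fun.pf_mult algebra_simps)
next
  case (pf_const c)
  have "dir_deriv v (\<lambda>A. c) = (\<lambda>A. 0)" for v
    by (simp add: fun_eq_iff)
  then show ?case
    by simp
next
  case (pf_coord i j)
  have "dir_deriv v (\<lambda>A. A i j) = (\<lambda>A. v i j)" for v
    by (simp add: fun_eq_iff)
  then show ?case
    by simp
qed

lemma dir_deriv_cong_line: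
  "(\<And>t. f (mat_line A t v) = g (mat_line A t v)) \<Longrightarrow> dir_deriv v f A = dir_deriv v g A"
  by (simp add: dir_deriv_def)

lemma dir_deriv_on_line:
  assumes "poly_fun N k1" and "poly_fun N k2"
    and "\<And>t. G (mat_line A t v) = k1 (mat_line A t v) + t * k2 (mat_line A t v)"
  shows "dir_deriv v G A = dir_deriv v k1 A + k2 A"
proof (rule dir_deriv_eqI)
  have "((\<lambda>t. k1 (mat_line A t v) + t * k2 (mat_line A t v)) has_field_derivative
      dir_deriv v k1 A + (0 * dir_deriv v k2 A + 1 * k2 (mat_line A 0 v))) (at 0)"
    by (intro DERIV_add DERIV_mult' has_dir_deriv[OF assms(1)] has_dir_deriv[OF assms(2)] DERIV_ident)
  then show "((\<lambda>t. G (mat_line A t v)) has_field_derivative dir_deriv v k1 A + k2 A) (at 0)"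
    by (simp add: assms(3))
qed

end

section \<open>Polynomial tensor fields\<close>

definition poly_field :: "nat \<Rightarrow> (mat \<Rightarrow> tens) \<Rightarrow> bool" where
  "poly_field N G \<longleftrightarrow> (\<forall>w. poly_fun N (\<lambda>A. G A w))"

lemma poly_fieldD: "poly_field N G \<Longrightarrow> poly_fun N (\<lambda>A. G A w)"
  by (simp add: poly_field_def)

lemma poly_field_add: "poly_field N G \<Longrightarrow> poly_field N H \<Longrightarrow> poly_field N (\<lambda>A w. G A w + H A w)"
  by (simp add: poly_field_def poly_fun.pf_add)

lemma poly_field_scale: "poly_field N G \<Longrightarrow> poly_field N (\<lambda>A w. c * G A w)"
  by (simp add: poly_field_def poly_fun_scale)

lemma dderiv_eq: "dderiv v G A = (\<lambda>w. dir_deriv v (\<lambda>A. G A w) A)"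
  by (simp add: fun_eq_iff dderiv_eq_dir_deriv)

lemma poly_field_dderiv: "poly_field N G \<Longrightarrow> poly_field N (dderiv v G)"
  by (simp add: poly_field_def dderiv_eq poly_fun_dir_deriv)

lemma dderiv_add_field:
  "poly_field N G \<Longrightarrow> poly_field N H \<Longrightarrow>
    dderiv v (\<lambda>A w. G A w + H A w) A w = dderiv v G A w + dderiv v H A w"
  unfolding dderiv_eq_dir_deriv by (rule dir_deriv_add[where N = N]) (simp_all add: poly_fieldD)

lemma dderiv_lincomb_field:
  "finite S \<Longrightarrow> (\<And>k. k \<in> S \<Longrightarrow> poly_field N (G k)) \<Longrightarrow>
    dderiv v (\<lambda>A w. \<Sum>k\<in>S. c k * G k A w) = (\<lambda>A w. \<Sum>k\<in>S. c k * dderiv v (G k) A w)"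
  unfolding dderiv_eq by (intro ext dir_deriv_lincomb[where N = N]) (simp_all add: poly_fieldD)

lemma dderiv_sum_field:
  "finite S \<Longrightarrow> (\<And>k. k \<in> S \<Longrightarrow> poly_field N (G k)) \<Longrightarrow>
    dderiv v (\<lambda>A w. \<Sum>k\<in>S. G k A w) = (\<lambda>A w. \<Sum>k\<in>S. dderiv v (G k) A w)"
  using dderiv_lincomb_field[of S N G v "\<lambda>_. 1"] by simp

lemma dderiv_scale_field:
  "poly_field N G \<Longrightarrow> dderiv v (\<lambda>A w. c * G A w) A w = c * dderiv v G A w"
  unfolding dderiv_eq_dir_deriv by (rule dir_deriv_scale[where N = N]) (simp add: poly_fieldD)

lemma dderiv_lincomb_dir:
  "finite S \<Longrightarrow> poly_field N G \<Longrightarrow>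
    dderiv (\<lambda>i j. \<Sum>q\<in>S. c q * u q i j) G A w = (\<Sum>q\<in>S. c q * dderiv (u q) G A w)"
  unfolding dderiv_eq_dir_deriv by (rule dir_deriv_lincomb_dir[where N = N]) (simp_all add: poly_fieldD)

lemma dderiv_sum_dir:
  "finite S \<Longrightarrow> poly_field N G \<Longrightarrow>
    dderiv (\<lambda>i j. \<Sum>q\<in>S. u q i j) G = (\<lambda>A w. \<Sum>q\<in>S. dderiv (u q) G A w)"
  using dderiv_lincomb_dir[of S N G "\<lambda>_. 1" u] by (simp add: fun_eq_iff)

lemma dderiv_scale_dir: "poly_field N G \<Longrightarrow> dderiv (\<lambda>i j. c * u i j) G = (\<lambda>A w. c * dderiv u G A w)"
  unfolding dderiv_eq by (intro ext dir_deriv_scale_dir[where N = N]) (simp add: poly_fieldD)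

lemma dderiv_zero_dir: "poly_field N G \<Longrightarrow> dderiv (\<lambda>i j. 0) G A w = 0"
  unfolding dderiv_eq_dir_deriv by (rule dir_deriv_zero_dir[where N = N]) (simp add: poly_fieldD)

lemma dderiv_mat_line_dir:
  "poly_field N G \<Longrightarrow> dderiv (mat_line u c v) G A w = dderiv u G A w + c * dderiv v G A w"
  unfolding dderiv_eq_dir_deriv by (rule dir_deriv_mat_line_dir[where N = N]) (simp add: poly_fieldD)

lemma dderiv_commute: "poly_field N G \<Longrightarrow> dderiv u (dderiv v G) A w = dderiv v (dderiv u G) A w"
  unfolding dderiv_eq by (rule dir_deriv_commute[where N = N]) (simp add: poly_fieldD)

lemma sum_dderiv2_by_dir_sum:
  assumes "poly_field N G" and "finite S" and "(\<lambda>i j. \<Sum>k\<in>S. L k i j) = (\<lambda>i j. c * u i j)"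
  shows "(\<Sum>k\<in>S. dderiv v (dderiv (L k) G) A w) = c * dderiv v (dderiv u G) A w"
proof -
  have "(\<lambda>B w. \<Sum>k\<in>S. dderiv (L k) G B w) = (\<lambda>B w. c * dderiv u G B w)"
    using dderiv_sum_dir[OF assms(2,1), of L] dderiv_scale_dir[OF assms(1), of c u] assms(3) by simp
  moreover have "(\<Sum>k\<in>S. dderiv v (dderiv (L k) G) A w)
      = dderiv v (\<lambda>B w. \<Sum>k\<in>S. dderiv (L k) G B w) A w"
    using assms(1,2) by (simp add: dderiv_sum_field[where N = N] poly_field_dderiv)
  ultimately show ?thesis
    using assms(1) by (simp add: dderiv_scale_field[where N = N] poly_field_dderiv)
qed

section \<open>Action on tensor factors\<close>

lemma act_factor_mat_mult:
  "i < length w \<Longrightarrow> act_factor N i X (act_factor N i Y T) w = act_factor N i (mat_mult N X Y) T w"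
  unfolding act_factor_def mat_mult_def
  by (simp add: sum_distrib_left sum_distrib_right mult.assoc, subst sum.swap, simp)

lemma act_factor_id_mat: "i < length w \<Longrightarrow> w ! i < N \<Longrightarrow> act_factor N i (id_mat N) T w = T w"
  unfolding act_factor_def id_mat_def by (simp add: if_distrib[of "\<lambda>x. x * _"] cong: if_cong)

lemma act_factor_add_mat:
  "act_factor N i (\<lambda>a c. P a c + Q a c) T w = act_factor N i P T w + act_factor N i Q T w"
  unfolding act_factor_def by (simp add: sum.distrib distrib_right)

lemma act_factor_scale_mat: "act_factor N i (\<lambda>a c. s * P a c) T w = s * act_factor N i P T w"
  unfolding act_factor_def by (simp add: sum_distrib_left mult.assoc)

lemma act_factor_sum_mat:
  "act_factor N i (\<lambda>a c. \<Sum>p\<in>S. P p a c) T w = (\<Sum>p\<in>S. act_factor N i (P p) T w)"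
  unfolding act_factor_def by (simp add: sum_distrib_right, subst sum.swap, simp)

lemma act_factor_add_tensor:
  "act_factor N i X (\<lambda>w'. T1 w' + T2 w') w = act_factor N i X T1 w + act_factor N i X T2 w"
  unfolding act_factor_def by (simp add: sum.distrib distrib_left)

lemma act_factor_scale_tensor: "act_factor N i X (\<lambda>w'. c * T w') w = c * act_factor N i X T w"
  unfolding act_factor_def by (simp add: sum_distrib_left mult.left_commute)

lemma act_factor_sum_tensor:
  "act_factor N i X (\<lambda>w'. \<Sum>p\<in>S. T p w') w = (\<Sum>p\<in>S. act_factor N i X (T p) w)"
  unfolding act_factor_def by (simp add: sum_distrib_left, subst sum.swap, simp)

lemma act_factor_sl_part:
  assumes "i < length w" and "w ! i < N"
  shows "act_factor N i (sl_part N Y) T w = act_factor N i Y T w - mtrace N Y / of_nat N * T w"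
proof -
  have "act_factor N i (sl_part N Y) T w
      = act_factor N i Y T w - mtrace N Y / of_nat N * act_factor N i (id_mat N) T w"
    unfolding act_factor_def sl_part_def by (simp add: sum_subtractf sum_distrib_left algebra_simps)
  then show ?thesis
    using act_factor_id_mat[OF assms] by simp
qed

lemma act_factor_cong:
  "i < length w \<Longrightarrow> (\<And>k. k < N \<Longrightarrow> T (w[i := k]) = T' (w[i := k])) \<Longrightarrow>
    act_factor N i X T w = act_factor N i X T' w"
  unfolding act_factor_def by (intro sum.cong) auto

lemma poly_fun_act_factor: "poly_field N G \<Longrightarrow> poly_fun N (\<lambda>A. act_factor N i X (G A) w)"
  unfolding act_factor_def poly_field_def by (intro poly_fun_sum poly_fun_scale) auto

lemma dir_deriv_act_factor:
  "poly_field N G \<Longrightarrow>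
    dir_deriv v (\<lambda>A. act_factor N i X (G A) w) A = act_factor N i X (dderiv v G A) w"
  unfolding act_factor_def poly_field_def
  by (simp add: dir_deriv_lincomb[where N = N] dderiv_eq_dir_deriv)

lemma dir_deriv_sum_act_factor:
  "poly_field N G \<Longrightarrow>
    dir_deriv v (\<lambda>A. \<Sum>i<n. act_factor N i X (G A) w) A = (\<Sum>i<n. act_factor N i X (dderiv v G A) w)"
  by (simp add: dir_deriv_sum[where N = N] poly_fun_act_factor dir_deriv_act_factor)

lemma dderiv_xop:
  assumes "poly_field N G" and "w ! i < N"
  shows "dderiv v (xop N i G) A w = act_factor N i v (G A) w + act_factor N i A (dderiv v G A) w"
proof -
  have coord: "poly_fun N (\<lambda>A. A (w ! i) k)" if "k < N" for k
    using assms(2) that by (rule poly_fun.pf_coord)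
  have G: "poly_fun N (\<lambda>A. G A w')" for w'
    using assms(1) by (simp add: poly_field_def)
  have "dderiv v (xop N i G) A w = (\<Sum>k<N. dir_deriv v (\<lambda>A. A (w ! i) k * G A (w[i := k])) A)"
    unfolding xop_def act_factor_def dderiv_eq_dir_deriv
    by (rule dir_deriv_sum) (auto intro: poly_fun.pf_mult coord G)
  also have "\<dots> = (\<Sum>k<N. v (w ! i) k * G A (w[i := k]) + A (w ! i) k * dderiv v G A (w[i := k]))"
    by (intro sum.cong refl) (simp add: dir_deriv_mult[OF coord G] dderiv_eq_dir_deriv)
  finally show ?thesis
    by (simp add: act_factor_def sum.distrib)
qed

section \<open>Orthonormal bases of sl_N\<close>

text \<open>Flattening N x N matrices to vectors of length N*N, the hypothesis says U^T V = 1 for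
  the matrices U, V with columns E p and the transposes of E' q; hence V U^T = 1, which is the
  claim.\<close>

lemma dual_bases_completeness:
  fixes E E' :: "nat \<Rightarrow> mat"
  assumes dual: "\<And>p q. p < N * N \<Longrightarrow> q < N * N \<Longrightarrow>
      (\<Sum>i<N. \<Sum>j<N. E p i j * E' q j i) = (if p = q then 1 else 0)"
    and idx: "a < N" "a' < N" "c < N" "c' < N"
  shows "(\<Sum>p<N * N. E' p a a' * E p c c') = (if a = c' \<and> a' = c then 1 else 0)"
proof -
  define M where "M = N * N"
  define U :: "complex Matrix.mat" where "U = Matrix.mat M M (\<lambda>(x, p). E p (x div N) (x mod N))"
  define V :: "complex Matrix.mat" where "V = Matrix.mat M M (\<lambda>(x, q). E' q (x mod N) (x div N))"
  have "transpose_mat U * V = 1\<^sub>m M"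
  proof (rule eq_matI)
    fix p q
    assume "p < dim_row (1\<^sub>m M)" and "q < dim_col (1\<^sub>m M)"
    then have pq: "p < M" "q < M"
      by simp_all
    have "(transpose_mat U * V) $$ (p, q)
        = (\<Sum>x<M. E p (x div N) (x mod N) * E' q (x mod N) (x div N))"
      using pq by (simp add: U_def V_def scalar_prod_def atLeast0LessThan)
    also have "\<dots> = (\<Sum>i<N. \<Sum>j<N. E p i j * E' q j i)"
      unfolding M_def by (rule sum_lessThan_square_div_mod[where g = "\<lambda>i j. E p i j * E' q j i"])
    also have "\<dots> = 1\<^sub>m M $$ (p, q)"
      using pq dual by (simp add: M_def)
    finally show "(transpose_mat U * V) $$ (p, q) = 1\<^sub>m M $$ (p, q)" .
  qed (simp_all add: U_def V_def)
  then have VU: "V * transpose_mat U = 1\<^sub>m M"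
    by (rule mat_mult_left_right_inverse[rotated 2]) (simp_all add: U_def V_def)
  define x y where "x = a' * N + a" and "y = c * N + c'"
  have xy: "x < M" "y < M"
    using idx by (simp_all add: x_def y_def M_def pair_index_less)
  have xy_div_mod: "x div N = a'" "x mod N = a" "y div N = c" "y mod N = c'"
    using idx by (simp_all add: x_def y_def)
  have "(V * transpose_mat U) $$ (x, y) = (\<Sum>p<M. E' p a a' * E p c c')"
    using xy xy_div_mod by (simp add: U_def V_def scalar_prod_def atLeast0LessThan)
  moreover have "x = y \<longleftrightarrow> a = c' \<and> a' = c"
    using xy_div_mod by (auto simp: x_def y_def)
  ultimately show ?thesis
    using VU xy by (simp add: M_def)
qed

locale sl_onb =
  fixes N :: nat and b :: "nat \<Rightarrow> mat"
  assumes onb: "onb N b" and N_pos: "0 < N"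
begin

lemma basis_in_sl: "p < dim_sl N \<Longrightarrow> in_sl N (b p)"
  using onb by (simp add: onb_def)

lemma basis_in_gl: "p < dim_sl N \<Longrightarrow> in_gl N (b p)"
  by (simp add: basis_in_sl in_sl_imp_in_gl)

lemma mtrace_basis: "p < dim_sl N \<Longrightarrow> mtrace N (b p) = 0"
  using basis_in_sl by (simp add: in_sl_def)

lemma basis_orthonormal:
  "p < dim_sl N \<Longrightarrow> q < dim_sl N \<Longrightarrow> coord N (b p) (b q) = (if p = q then 1 else 0)"
  using onb by (simp add: onb_def coord_def)

lemma of_nat_N_neq_0: "(of_nat N :: complex) \<noteq> 0"
  using N_pos by simp

lemma square_eq_Suc_dim_sl: "N * N = Suc (dim_sl N)"
  using N_pos by (simp add: dim_sl_def power2_eq_square)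

lemma of_nat_dim_sl: "(of_nat (dim_sl N) :: complex) = of_nat N * of_nat N - 1"
  using arg_cong[OF square_eq_Suc_dim_sl, of "of_nat :: nat \<Rightarrow> complex"] by simp

text \<open>Completed by the identity, whose dual is I/N, the b_p form a basis of all N x N
  matrices that is dual to itself under the trace form.\<close>

lemma completeness:
  assumes idx: "a < N" "a' < N" "c < N" "c' < N"
  shows "(\<Sum>p<dim_sl N. b p a a' * b p c c')
    = (if a = c' \<and> a' = c then 1 else 0) - (if a = a' \<and> c = c' then 1 / of_nat N else 0)"
proof -
  define E where "E p = (if p < dim_sl N then b p else (\<lambda>i j. if i = j then 1 else 0))" for p
  define E' where "E' p = (if p < dim_sl N then b p else (\<lambda>i j. if i = j then 1 / of_nat N else 0))"
    for p
  have dual: "(\<Sum>i<N. \<Sum>j<N. E p i j * E' q j i) = (if p = q then 1 else 0)"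
    if pq: "p < N * N" "q < N * N" for p q
  proof -
    consider "p < dim_sl N" "q < dim_sl N" | "p < dim_sl N" "q = dim_sl N"
      | "p = dim_sl N" "q < dim_sl N" | "p = dim_sl N" "q = dim_sl N"
      using pq square_eq_Suc_dim_sl by linarith
    then show ?thesis
    proof cases
      case 1
      then show ?thesis
        using basis_orthonormal[of p q] by (simp add: E_def E'_def coord_def mtrace_def mat_mult_def)
    next
      case 2
      then show ?thesis
        using mtrace_basis[of p]
        by (simp add: E_def E'_def mtrace_def if_distrib[of "\<lambda>x. _ * x"] flip: sum_divide_distrib
            cong: if_cong)
    next
      case 3
      then show ?thesis
        using mtrace_basis[of q]
        by (simp add: E_def E'_def mtrace_def if_distrib[of "\<lambda>x. x * _"] cong: if_cong)
    next
      case 4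
      then show ?thesis
        using of_nat_N_neq_0 by (simp add: E_def E'_def if_distrib[of "\<lambda>x. x * _"] cong: if_cong)
    qed
  qed
  have "(\<Sum>p<N * N. E' p a a' * E p c c')
      = (\<Sum>p<dim_sl N. b p a a' * b p c c') + (if a = a' \<and> c = c' then 1 / of_nat N else 0)"
    unfolding square_eq_Suc_dim_sl using idx by (simp add: E_def E'_def)
  then show ?thesis
    using dual_bases_completeness[OF dual idx] by (simp add: eq_diff_eq)
qed

lemma basis_expansion:
  assumes "in_sl N u"
  shows "(\<lambda>i j. \<Sum>q<dim_sl N. coord N (b q) u * b q i j) = u"
proof (intro ext)
  fix i j
  show "(\<Sum>q<dim_sl N. coord N (b q) u * b q i j) = u i j"
  proof (cases "i < N \<and> j < N")
    case True
    have "(\<Sum>q<dim_sl N. coord N (b q) u * b q i j)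
        = (\<Sum>a<N. \<Sum>k<N. u k a * (\<Sum>q<dim_sl N. b q a k * b q i j))"
      unfolding coord_def mtrace_def mat_mult_def
      by (simp add: sum_distrib_left sum_distrib_right mult_ac, subst sum.swap,
          simp add: sum.swap[of _ "{..<dim_sl N}"])
    also have "\<dots> = u i j - (if i = j then mtrace N u / of_nat N else 0)"
      using True by (simp add: completeness right_diff_distrib sum_subtractf sum_if_cond_const
          sum_divide_distrib mtrace_def if_distrib[of "\<lambda>x. _ * x"] flip: if_if_eq_conj cong: if_cong)
    finally show ?thesis
      using assms by (simp add: in_sl_def)
  next
    case False
    then have "b q i j = 0" if "q < dim_sl N" for q
      using basis_in_gl[OF that] by (simp add: in_glD)
    then show ?thesis
      using False in_glD[OF in_sl_imp_in_gl[OF assms]] by simp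
  qed
qed

lemma sum_basis_sandwich:
  assumes "in_gl N Y"
  shows "(\<lambda>i j. \<Sum>p<dim_sl N. mat_mult N (b p) (mat_mult N Y (b p)) i j)
    = (\<lambda>i j. mtrace N Y * id_mat N i j - Y i j / of_nat N)"
proof (intro ext)
  fix i j
  show "(\<Sum>p<dim_sl N. mat_mult N (b p) (mat_mult N Y (b p)) i j)
      = mtrace N Y * id_mat N i j - Y i j / of_nat N"
  proof (cases "i < N \<and> j < N")
    case True
    have "(\<Sum>p<dim_sl N. mat_mult N (b p) (mat_mult N Y (b p)) i j)
        = (\<Sum>k<N. \<Sum>l<N. Y k l * (\<Sum>p<dim_sl N. b p i k * b p l j))"
      unfolding mat_mult_def
      by (simp add: sum_distrib_left sum_distrib_right mult_ac, subst sum.swap,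
          simp add: sum.swap[of _ "{..<dim_sl N}"])
    also have "\<dots> = (if i = j then mtrace N Y else 0) - Y i j / of_nat N"
      using True by (simp add: completeness right_diff_distrib sum_subtractf sum_if_cond_const
          mtrace_def if_distrib[of "\<lambda>x. _ * x"] flip: if_if_eq_conj cong: if_cong)
    finally show ?thesis
      using True by (simp add: id_mat_def)
  next
    case False
    then have "mat_mult N (b p) (mat_mult N Y (b p)) i j = 0" if "p < dim_sl N" for p
      using in_glD[OF in_gl_mat_mult[OF basis_in_gl[OF that]
          in_gl_mat_mult[OF assms basis_in_gl[OF that]]]]
      by simp
    then show ?thesis
      using False in_glD[OF assms] by (auto simp: id_mat_def)
  qed
qed

lemma sum_basis_square:
  "(\<lambda>i j. \<Sum>p<dim_sl N. mat_mult N (b p) (b p) i j) = (\<lambda>i j. (of_nat N - 1 / of_nat N) * id_mat N i j)"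
proof -
  have "mat_mult N (b p) (b p) = mat_mult N (b p) (mat_mult N (id_mat N) (b p))"
    if "p < dim_sl N" for p
    using basis_in_gl[OF that] by (simp add: mat_mult_id_left)
  then have "(\<lambda>i j. \<Sum>p<dim_sl N. mat_mult N (b p) (b p) i j)
      = (\<lambda>i j. mtrace N (id_mat N) * id_mat N i j - id_mat N i j / of_nat N)"
    by (simp add: sum_basis_sandwich[OF in_gl_id_mat, symmetric])
  then show ?thesis
    by (simp add: mtrace_id_mat algebra_simps)
qed

lemma sum_coord_square:
  assumes "in_sl N A"
  shows "(\<Sum>p<dim_sl N. (coord N (b p) A)\<^sup>2) = mtrace N (mat_mult N A A)"
proof -
  have "(\<Sum>p<dim_sl N. (coord N (b p) A)\<^sup>2) = coord N A (\<lambda>i j. \<Sum>p<dim_sl N. coord N (b p) A * b p i j)"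
    by (simp add: coord_sum coord_scale coord_commute[of N A] power2_eq_square)
  then show ?thesis
    unfolding basis_expansion[OF assms] by (simp add: coord_def)
qed

lemma dderiv_basis_expansion:
  assumes "in_sl N u" and "poly_field N G"
  shows "dderiv u G = (\<lambda>A w. \<Sum>q<dim_sl N. coord N (b q) u * dderiv (b q) G A w)"
  using dderiv_lincomb_dir[OF _ assms(2), of "{..<dim_sl N}" "\<lambda>q. coord N (b q) u" b]
  by (simp add: basis_expansion[OF assms(1)] fun_eq_iff)

lemma sum_act_factor_basis_square:
  assumes "i < length w" and "w ! i < N"
  shows "(\<Sum>p<dim_sl N. act_factor N i (mat_mult N (b p) (b p)) T w) = (of_nat N - 1 / of_nat N) * T w"
  using act_factor_sum_mat[of N i "\<lambda>p. mat_mult N (b p) (b p)" "{..<dim_sl N}" T w]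
  by (simp add: sum_basis_square act_factor_scale_mat act_factor_id_mat[OF assms])

lemma sum_lie_br_anticommutator_basis:
  assumes "in_gl N A"
  shows "(\<lambda>i j. \<Sum>p<dim_sl N. lie_br N (\<lambda>a c. mat_mult N A (b p) a c + mat_mult N (b p) A a c) (b p) i j)
    = (\<lambda>i j. 0)"
proof -
  have "(\<lambda>i j. \<Sum>p<dim_sl N. lie_br N (\<lambda>a c. mat_mult N A (b p) a c + mat_mult N (b p) A a c) (b p) i j)
      = lie_br N A (\<lambda>i j. \<Sum>p<dim_sl N. mat_mult N (b p) (b p) i j)"
    by (simp add: lie_br_def mat_mult_linear mat_mult_assoc sum_subtractf)
  then show ?thesis
    by (simp add: sum_basis_square lie_br_def mat_mult_scale_left mat_mult_scale_right
        mat_mult_id_left[OF assms] mat_mult_id_right[OF assms])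
qed

lemma sum_lie_br_basis_product_left:
  assumes "q < dim_sl N"
  shows "(\<lambda>i j. \<Sum>p<dim_sl N. lie_br N (mat_mult N (b p) (b q)) (b p) i j)
    = (\<lambda>i j. - of_nat N * b q i j)"
proof -
  have "(\<lambda>i j. \<Sum>p<dim_sl N. lie_br N (mat_mult N (b p) (b q)) (b p) i j)
      = (\<lambda>i j. (\<Sum>p<dim_sl N. mat_mult N (b p) (mat_mult N (b q) (b p)) i j)
          - mat_mult N (\<lambda>a c. \<Sum>p<dim_sl N. mat_mult N (b p) (b p) a c) (b q) i j)"
    by (simp add: lie_br_def mat_mult_assoc mat_mult_sum_left sum_subtractf)
  also have "\<dots> = (\<lambda>i j. - b q i j / of_nat N - (of_nat N - 1 / of_nat N) * b q i j)"
    by (simp add: sum_basis_sandwich[OF basis_in_gl[OF assms], unfolded fun_eq_iff, rule_format]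
        mtrace_basis[OF assms] sum_basis_square mat_mult_scale_left
        mat_mult_id_left[OF basis_in_gl[OF assms]])
  finally show ?thesis
    by (simp add: algebra_simps)
qed

lemma sum_lie_br_basis_product_right:
  assumes "p < dim_sl N"
  shows "(\<lambda>i j. \<Sum>q<dim_sl N. lie_br N (mat_mult N (b p) (b q)) (b q) i j)
    = (\<lambda>i j. of_nat N * b p i j)"
proof -
  have "(\<lambda>i j. \<Sum>q<dim_sl N. lie_br N (mat_mult N (b p) (b q)) (b q) i j)
      = (\<lambda>i j. mat_mult N (b p) (\<lambda>a c. \<Sum>q<dim_sl N. mat_mult N (b q) (b q) a c) i j
          - (\<Sum>q<dim_sl N. mat_mult N (b q) (mat_mult N (b p) (b q)) i j))"
    by (simp add: lie_br_def mat_mult_assoc mat_mult_sum_right sum_subtractf)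
  also have "\<dots> = (\<lambda>i j. (of_nat N - 1 / of_nat N) * b p i j + b p i j / of_nat N)"
    by (simp add: sum_basis_sandwich[OF basis_in_gl[OF assms], unfolded fun_eq_iff, rule_format]
        mtrace_basis[OF assms] sum_basis_square mat_mult_scale_right
        mat_mult_id_right[OF basis_in_gl[OF assms]])
  finally show ?thesis
    by (simp add: algebra_simps)
qed

end

section \<open>Invariant tensor fields\<close>

locale V_element = sl_onb +
  fixes n :: nat and F :: "mat \<Rightarrow> tens"
  assumes F_in_V: "F \<in> V N n" and n_pos: "0 < n"
begin

lemma poly_field_F: "poly_field N F"
  using F_in_V by (simp add: V_def poly_field_def)

lemma poly_field_dderiv_F: "poly_field N (dderiv v F)"
  by (rule poly_field_dderiv[OF poly_field_F])

lemma poly_field_dderiv2_F: "poly_field N (dderiv u (dderiv v F))"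
  by (rule poly_field_dderiv[OF poly_field_dderiv_F])

lemma sl_invariance:
  "in_sl N X \<Longrightarrow> in_sl N A \<Longrightarrow> valid_idx N n w \<Longrightarrow>
    dderiv (lie_br N X A) F A w = (\<Sum>i<n. act_factor N i X (F A) w)"
  using F_in_V by (simp add: V_def)

lemma valid_idx_nth: "valid_idx N n w \<Longrightarrow> i < n \<Longrightarrow> i < length w \<and> w ! i < N"
  by (simp add: valid_idx_def)

lemma gl_invariance:
  assumes Y: "in_gl N Y" and A: "in_sl N A" and w: "valid_idx N n w"
  shows "(\<Sum>i<n. act_factor N i Y (F A) w)
    = dderiv (lie_br N Y A) F A w + of_nat n * (mtrace N Y / of_nat N) * F A w"
proof -
  have "dderiv (lie_br N Y A) F A w = dderiv (lie_br N (sl_part N Y) A) F A w"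
    by (simp add: lie_br_sl_part in_sl_imp_in_gl[OF A])
  also have "\<dots> = (\<Sum>i<n. act_factor N i (sl_part N Y) (F A) w)"
    by (rule sl_invariance[OF sl_part_in_sl[OF N_pos Y] A w])
  also have "\<dots> = (\<Sum>i<n. act_factor N i Y (F A) w - mtrace N Y / of_nat N * F A w)"
    using w by (intro sum.cong refl) (simp add: act_factor_sl_part valid_idx_nth)
  finally show ?thesis
    by (simp add: sum_subtractf)
qed

lemma gl_invariance_dderiv:
  assumes Y: "in_gl N Y" and A: "in_sl N A" and v: "in_sl N v" and w: "valid_idx N n w"
  shows "(\<Sum>i<n. act_factor N i Y (dderiv v F A) w)
    = dderiv v (dderiv (lie_br N Y A) F) A w + dderiv (lie_br N Y v) F A w
      + of_nat n * (mtrace N Y / of_nat N) * dderiv v F A w"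
proof -
  define c where "c = of_nat n * (mtrace N Y / of_nat N)"
  define k1 where "k1 A' = dderiv (lie_br N Y A) F A' w + c * F A' w" for A'
  have "(\<Sum>i<n. act_factor N i Y (dderiv v F A) w)
      = dir_deriv v (\<lambda>A. \<Sum>i<n. act_factor N i Y (F A) w) A"
    by (simp add: dir_deriv_sum_act_factor[OF poly_field_F])
  also have "\<dots> = dir_deriv v (\<lambda>A'. dderiv (lie_br N Y A') F A' w + c * F A' w) A"
    by (rule dir_deriv_cong_line) (simp add: gl_invariance[OF Y in_sl_mat_line[OF A v] w] c_def)
  also have "\<dots> = dir_deriv v k1 A + dderiv (lie_br N Y v) F A w"
  proof (rule dir_deriv_on_line)
    show "poly_fun N k1"
      unfolding k1_def
      by (intro poly_fun.pf_add poly_fun_scale poly_fieldD poly_field_dderiv_F poly_field_F)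
    show "poly_fun N (\<lambda>A'. dderiv (lie_br N Y v) F A' w)"
      by (rule poly_fieldD[OF poly_field_dderiv_F])
  qed (simp add: k1_def lie_br_mat_line dderiv_mat_line_dir[OF poly_field_F] algebra_simps)
  also have "dir_deriv v k1 A = dderiv v (\<lambda>B w. dderiv (lie_br N Y A) F B w + c * F B w) A w"
    by (simp add: k1_def[abs_def] dderiv_eq_dir_deriv)
  also have "\<dots> = dderiv v (dderiv (lie_br N Y A) F) A w + c * dderiv v F A w"
    by (simp add: dderiv_add_field[where N = N] dderiv_scale_field[where N = N]
        poly_field_dderiv_F poly_field_F poly_field_scale)
  finally show ?thesis
    by (simp add: c_def)
qed

lemma gl_invariance_dderiv2:
  assumes Y: "in_gl N Y" and A: "in_sl N A" and u: "in_sl N u" and v: "in_sl N v"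
    and w: "valid_idx N n w"
  shows "(\<Sum>i<n. act_factor N i Y (dderiv u (dderiv v F) A) w)
    = dderiv u (dderiv v (dderiv (lie_br N Y A) F)) A w + dderiv v (dderiv (lie_br N Y u) F) A w
      + dderiv u (dderiv (lie_br N Y v) F) A w
      + of_nat n * (mtrace N Y / of_nat N) * dderiv u (dderiv v F) A w"
proof -
  define c where "c = of_nat n * (mtrace N Y / of_nat N)"
  define k1 where "k1 A' = dderiv v (dderiv (lie_br N Y A) F) A' w + dderiv (lie_br N Y v) F A' w
      + c * dderiv v F A' w" for A'
  define k2 where "k2 A' = dderiv v (dderiv (lie_br N Y u) F) A' w" for A'
  have poly: "poly_fun N (\<lambda>A. dderiv v F A w)" "poly_fun N (\<lambda>A. dderiv x F A w)"
    "poly_fun N (\<lambda>A. dderiv v (dderiv x F) A w)" for x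
    by (intro poly_fieldD poly_field_dderiv_F poly_field_dderiv2_F)+
  have "(\<Sum>i<n. act_factor N i Y (dderiv u (dderiv v F) A) w)
      = dir_deriv u (\<lambda>A. \<Sum>i<n. act_factor N i Y (dderiv v F A) w) A"
    by (simp add: dir_deriv_sum_act_factor[OF poly_field_dderiv_F])
  also have "\<dots> = dir_deriv u (\<lambda>A'. dderiv v (dderiv (lie_br N Y A') F) A' w
      + dderiv (lie_br N Y v) F A' w + c * dderiv v F A' w) A"
    by (rule dir_deriv_cong_line)
      (simp add: gl_invariance_dderiv[OF Y in_sl_mat_line[OF A u] v w] c_def)
  also have "\<dots> = dir_deriv u k1 A + k2 A"
  proof (rule dir_deriv_on_line)
    show "poly_fun N k1"
      unfolding k1_def by (intro poly_fun.pf_add poly_fun_scale poly)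
    show "poly_fun N k2"
      unfolding k2_def by (rule poly)
    fix t
    have "dderiv (lie_br N Y (mat_line A t u)) F
        = (\<lambda>B w. dderiv (lie_br N Y A) F B w + t * dderiv (lie_br N Y u) F B w)"
      by (simp add: lie_br_mat_line dderiv_mat_line_dir[OF poly_field_F] fun_eq_iff)
    then show "dderiv v (dderiv (lie_br N Y (mat_line A t u)) F) (mat_line A t u) w
        + dderiv (lie_br N Y v) F (mat_line A t u) w + c * dderiv v F (mat_line A t u) w
      = k1 (mat_line A t u) + t * k2 (mat_line A t u)"
      by (simp add: k1_def k2_def dderiv_add_field[where N = N] dderiv_scale_field[where N = N]
          poly_field_dderiv_F poly_field_scale poly_field_add algebra_simps)
  qed
  also have "dir_deriv u k1 A = dderiv u (\<lambda>B w. dderiv v (dderiv (lie_br N Y A) F) B w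
      + dderiv (lie_br N Y v) F B w + c * dderiv v F B w) A w"
    by (simp add: k1_def[abs_def] dderiv_eq_dir_deriv)
  also have "\<dots> = dderiv u (dderiv v (dderiv (lie_br N Y A) F)) A w
      + dderiv u (dderiv (lie_br N Y v) F) A w + c * dderiv u (dderiv v F) A w"
    by (simp add: dderiv_add_field[where N = N] dderiv_scale_field[where N = N]
        poly_field_dderiv_F poly_field_dderiv2_F poly_field_scale poly_field_add)
  finally show ?thesis
    by (simp add: c_def k2_def)
qed

lemma fbold_eq:
  assumes A: "in_sl N A" and w: "valid_idx N n w"
  shows "fbold N n F A w = (of_nat n / of_nat N) * Fop N b F A w"
proof -
  have A_gl: "in_gl N A"
    by (rule in_sl_imp_in_gl[OF A])
  have "fbold N n F A w = 1 / 2 * (\<Sum>i<n. act_factor N i (mat_mult N A A) (F A) w)"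
    unfolding fbold_def xop_def using w by (simp add: act_factor_mat_mult valid_idx_nth)
  also have "(\<Sum>i<n. act_factor N i (mat_mult N A A) (F A) w)
      = of_nat n * (mtrace N (mat_mult N A A) / of_nat N) * F A w"
    using gl_invariance[OF in_gl_mat_mult[OF A_gl A_gl] A w]
    by (simp add: lie_br_square dderiv_zero_dir[OF poly_field_F])
  finally show ?thesis
    using of_nat_N_neq_0 by (simp add: Fop_def sum_coord_square[OF A] field_simps)
qed

lemma xop_yop:
  assumes "i < length w"
  shows "xop N i (yop N n b i F) A w
    = of_nat N / of_nat n * (\<Sum>p<dim_sl N. act_factor N i (mat_mult N A (b p)) (dderiv (b p) F A) w)"
  unfolding xop_def yop_def act_factor_scale_tensor act_factor_sum_tensor
  by (simp add: act_factor_mat_mult[OF assms])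

lemma yop_xop:
  assumes "i < length w"
  shows "yop N n b i (xop N i F) A w = of_nat N / of_nat n * (\<Sum>p<dim_sl N.
    act_factor N i (mat_mult N (b p) (b p)) (F A) w
    + act_factor N i (mat_mult N (b p) A) (dderiv (b p) F A) w)"
proof -
  have "act_factor N i (b p) (dderiv (b p) (xop N i F) A) w
      = act_factor N i (b p)
          (\<lambda>w'. act_factor N i (b p) (F A) w' + act_factor N i A (dderiv (b p) F A) w') w"
    for p
    using assms by (intro act_factor_cong) (simp_all add: dderiv_xop[OF poly_field_F])
  then show ?thesis
    unfolding yop_def by (simp add: act_factor_add_tensor act_factor_mat_mult[OF assms])
qed

lemma sum_dderiv_lie_br_basis_eq_0:
  assumes "in_gl N M"
  shows "(\<Sum>p<dim_sl N. dderiv (b p) (dderiv (lie_br N (b p) M) F) A w) = 0"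
proof -
  define s where "s r p = mtrace N (mat_mult N (mat_mult N (b r) (b p)) M)" for r p
  have coord: "coord N (b r) (lie_br N (b p) M) = s r p - s p r" for r p
  proof -
    have "mtrace N (mat_mult N (b r) (mat_mult N M (b p)))
        = mtrace N (mat_mult N (mat_mult N (b r) M) (b p))"
      by (simp add: mat_mult_assoc)
    also have "\<dots> = mtrace N (mat_mult N (b p) (mat_mult N (b r) M))"
      by (rule mtrace_mat_mult_commute)
    finally have "mtrace N (mat_mult N (b r) (mat_mult N M (b p))) = s p r"
      by (simp add: s_def mat_mult_assoc)
    then show ?thesis
      by (simp add: coord_def lie_br_def mat_mult_diff_right mtrace_diff s_def mat_mult_assoc)
  qed
  have "dderiv (b p) (dderiv (lie_br N (b p) M) F) A w
      = (\<Sum>r<dim_sl N. (s r p - s p r) * dderiv (b p) (dderiv (b r) F) A w)" if "p < dim_sl N" for p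
    using lie_br_in_sl[OF basis_in_gl[OF that] assms]
    by (simp add: dderiv_basis_expansion poly_field_F dderiv_lincomb_field[where N = N]
        poly_field_dderiv_F coord)
  then have "(\<Sum>p<dim_sl N. dderiv (b p) (dderiv (lie_br N (b p) M) F) A w)
      = (\<Sum>p<dim_sl N. \<Sum>r<dim_sl N. (s r p - s p r) * dderiv (b p) (dderiv (b r) F) A w)"
    by simp
  also have "\<dots> = 0"
    by (rule sum_skew_mult_sym_eq_0) (rule dderiv_commute[OF poly_field_F])
  finally show ?thesis .
qed

lemma sum_act_anticommutator_basis:
  assumes A: "in_sl N A" and w: "valid_idx N n w"
  shows "(\<Sum>p<dim_sl N. \<Sum>i<n. act_factor N i (\<lambda>a c. mat_mult N A (b p) a c + mat_mult N (b p) A a c)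
      (dderiv (b p) F A) w)
    = 2 * of_nat n / of_nat N * (\<Sum>p<dim_sl N. coord N (b p) A * dderiv (b p) F A w)"
proof -
  have A_gl: "in_gl N A"
    by (rule in_sl_imp_in_gl[OF A])
  define Y where "Y p = (\<lambda>a c. mat_mult N A (b p) a c + mat_mult N (b p) A a c)" for p
  have Y_gl: "in_gl N (Y p)" if "p < dim_sl N" for p
    unfolding Y_def by (intro in_gl_add in_gl_mat_mult A_gl basis_in_gl that)
  have "mtrace N (Y p) = 2 * coord N (b p) A" for p
    by (simp add: Y_def mtrace_def mat_mult_def sum.distrib coord_def
        mtrace_mat_mult_commute[of N A, unfolded mtrace_def mat_mult_def])
  then have "(\<Sum>i<n. act_factor N i (Y p) (dderiv (b p) F A) w)
      = dderiv (b p) (dderiv (lie_br N (b p) (mat_mult N A A)) F) A w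
        + dderiv (lie_br N (Y p) (b p)) F A w
        + 2 * of_nat n / of_nat N * (coord N (b p) A * dderiv (b p) F A w)" if "p < dim_sl N" for p
    using gl_invariance_dderiv[OF Y_gl[OF that] A basis_in_sl[OF that] w]
    by (simp add: Y_def lie_br_anticommutator)
  then have "(\<Sum>p<dim_sl N. \<Sum>i<n. act_factor N i (Y p) (dderiv (b p) F A) w)
      = (\<Sum>p<dim_sl N. dderiv (b p) (dderiv (lie_br N (b p) (mat_mult N A A)) F) A w)
        + dderiv (\<lambda>i j. \<Sum>p<dim_sl N. lie_br N (Y p) (b p) i j) F A w
        + 2 * of_nat n / of_nat N * (\<Sum>p<dim_sl N. coord N (b p) A * dderiv (b p) F A w)"
    by (simp add: sum.distrib sum_distrib_left dderiv_sum_dir[where N = N] poly_field_F)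
  also have "\<dots> = 2 * of_nat n / of_nat N * (\<Sum>p<dim_sl N. coord N (b p) A * dderiv (b p) F A w)"
    using sum_lie_br_anticommutator_basis[OF A_gl]
    by (simp add: sum_dderiv_lie_br_basis_eq_0 in_gl_mat_mult A_gl Y_def
        dderiv_zero_dir[OF poly_field_F])
  finally show ?thesis
    by (simp add: Y_def)
qed

lemma hbold_eq:
  assumes A: "in_sl N A" and w: "valid_idx N n w"
  shows "hbold N n b F A w = Hop N b F A w"
proof -
  let ?T = "\<lambda>p i. act_factor N i (\<lambda>a c. mat_mult N A (b p) a c + mat_mult N (b p) A a c)
    (dderiv (b p) F A) w"
  have "xop N i (yop N n b i F) A w + yop N n b i (xop N i F) A w
      = of_nat N / of_nat n * ((\<Sum>p<dim_sl N. ?T p i) + (of_nat N - 1 / of_nat N) * F A w)"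
    if "i < n" for i
    using valid_idx_nth[OF w that]
    by (simp add: xop_yop yop_xop sum.distrib act_factor_add_mat sum_act_factor_basis_square
        algebra_simps)
  then have "hbold N n b F A w
      = 1 / 2 * (\<Sum>i<n. of_nat N / of_nat n
          * ((\<Sum>p<dim_sl N. ?T p i) + (of_nat N - 1 / of_nat N) * F A w))"
    unfolding hbold_def by simp
  also have "\<dots> = 1 / 2 * (of_nat N / of_nat n)
      * ((\<Sum>i<n. \<Sum>p<dim_sl N. ?T p i) + of_nat n * (of_nat N - 1 / of_nat N) * F A w)"
    by (simp only: sum_distrib_left[symmetric] sum.distrib) simp
  also have "\<dots> = 1 / 2 * (of_nat N / of_nat n)
      * ((\<Sum>p<dim_sl N. \<Sum>i<n. ?T p i) + of_nat n * (of_nat N - 1 / of_nat N) * F A w)"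
    by (simp only: sum.swap[of _ "{..<n}"])
  also have "\<dots> = Hop N b F A w"
    unfolding sum_act_anticommutator_basis[OF A w] Hop_def of_nat_dim_sl
    using n_pos of_nat_N_neq_0 by (simp add: field_simps)
  finally show ?thesis .
qed

lemma dderiv_yop:
  assumes "poly_field N G"
  shows "dderiv v (yop N n b i G) A
    = (\<lambda>w. of_nat N / of_nat n * (\<Sum>q<dim_sl N. act_factor N i (b q) (dderiv v (dderiv (b q) G) A) w))"
proof
  fix w
  have act_poly: "poly_fun N (\<lambda>A. act_factor N i (b q) (dderiv (b q) G A) w)" for q
    by (rule poly_fun_act_factor[OF poly_field_dderiv[OF assms]])
  have "dderiv v (yop N n b i G) A w
      = dir_deriv v
          (\<lambda>A. of_nat N / of_nat n * (\<Sum>q<dim_sl N. act_factor N i (b q) (dderiv (b q) G A) w)) A"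
    by (simp add: dderiv_eq_dir_deriv yop_def)
  also have "\<dots> = of_nat N / of_nat n
      * dir_deriv v (\<lambda>A. \<Sum>q<dim_sl N. act_factor N i (b q) (dderiv (b q) G A) w) A"
    by (rule dir_deriv_scale[where N = N]) (simp add: poly_fun_sum act_poly)
  also have "dir_deriv v (\<lambda>A. \<Sum>q<dim_sl N. act_factor N i (b q) (dderiv (b q) G A) w) A
      = (\<Sum>q<dim_sl N. dir_deriv v (\<lambda>A. act_factor N i (b q) (dderiv (b q) G A) w) A)"
    by (rule dir_deriv_sum[where N = N]) (simp_all add: act_poly)
  finally show "dderiv v (yop N n b i G) A w
      = of_nat N / of_nat n * (\<Sum>q<dim_sl N. act_factor N i (b q) (dderiv v (dderiv (b q) G) A) w)"
    by (simp add: dir_deriv_act_factor[OF poly_field_dderiv[OF assms]])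
qed

lemma yop_yop:
  assumes "i < length w"
  shows "yop N n b i (yop N n b i F) A w = (of_nat N / of_nat n)\<^sup>2 * (\<Sum>p<dim_sl N. \<Sum>q<dim_sl N.
    act_factor N i (mat_mult N (b p) (b q)) (dderiv (b p) (dderiv (b q) F) A) w)"
  unfolding yop_def[of N n b i "yop N n b i F"] dderiv_yop[OF poly_field_F] act_factor_scale_tensor
    act_factor_sum_tensor
  by (simp add: act_factor_mat_mult[OF assms] sum_distrib_left power2_eq_square mult.assoc)

lemma dderiv3_cyclic:
  "dderiv q (dderiv r (dderiv p F)) A w = dderiv p (dderiv q (dderiv r F)) A w"
proof -
  have "dderiv r (dderiv p F) = dderiv p (dderiv r F)"
    using dderiv_commute[OF poly_field_F] by (simp add: fun_eq_iff)
  then show ?thesis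
    by (simp add: dderiv_commute[OF poly_field_dderiv_F])
qed

lemma sum_dderiv3_lie_br_basis_eq_0:
  assumes "in_gl N A"
  shows "(\<Sum>p<dim_sl N. \<Sum>q<dim_sl N.
    dderiv (b p) (dderiv (b q) (dderiv (lie_br N (mat_mult N (b p) (b q)) A) F)) A w) = 0"
proof -
  define \<tau> where "\<tau> x y z = mtrace N (mat_mult N (b x) (mat_mult N (b y) (mat_mult N (b z) A)))"
    for x y z
  have coord: "coord N (b r) (lie_br N (mat_mult N (b p) (b q)) A) = \<tau> r p q - \<tau> p q r" for p q r
  proof -
    have "mtrace N (mat_mult N (b r) (mat_mult N A (mat_mult N (b p) (b q))))
        = mtrace N (mat_mult N (mat_mult N (b r) A) (mat_mult N (b p) (b q)))"
      by (simp add: mat_mult_assoc)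
    also have "\<dots> = mtrace N (mat_mult N (mat_mult N (b p) (b q)) (mat_mult N (b r) A))"
      by (rule mtrace_mat_mult_commute)
    also have "\<dots> = \<tau> p q r"
      by (simp add: \<tau>_def mat_mult_assoc)
    finally show ?thesis
      by (simp add: coord_def lie_br_def mat_mult_diff_right mtrace_diff \<tau>_def mat_mult_assoc)
  qed
  have "dderiv (b p) (dderiv (b q) (dderiv (lie_br N (mat_mult N (b p) (b q)) A) F)) A w
      = (\<Sum>r<dim_sl N. (\<tau> r p q - \<tau> p q r) * dderiv (b p) (dderiv (b q) (dderiv (b r) F)) A w)"
    if "p < dim_sl N" and "q < dim_sl N" for p q
    using lie_br_in_sl[OF in_gl_mat_mult[OF basis_in_gl[OF that(1)] basis_in_gl[OF that(2)]] assms]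
    by (simp add: dderiv_basis_expansion poly_field_F dderiv_lincomb_field[where N = N]
        poly_field_dderiv_F poly_field_dderiv2_F coord)
  then have "(\<Sum>p<dim_sl N. \<Sum>q<dim_sl N.
      dderiv (b p) (dderiv (b q) (dderiv (lie_br N (mat_mult N (b p) (b q)) A) F)) A w)
    = (\<Sum>p<dim_sl N. \<Sum>q<dim_sl N. \<Sum>r<dim_sl N.
      (\<tau> r p q - \<tau> p q r) * dderiv (b p) (dderiv (b q) (dderiv (b r) F)) A w)"
    by simp
  also have "\<dots> = 0"
    by (rule sum_cyclic_diff_mult_cyclic_eq_0) (rule dderiv3_cyclic)
  finally show ?thesis .
qed

lemma sum_act_basis_products:
  assumes A: "in_sl N A" and w: "valid_idx N n w"
  shows "(\<Sum>p<dim_sl N. \<Sum>q<dim_sl N. \<Sum>i<n.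
      act_factor N i (mat_mult N (b p) (b q)) (dderiv (b p) (dderiv (b q) F) A) w)
    = of_nat n / of_nat N * (\<Sum>p<dim_sl N. dderiv (b p) (dderiv (b p) F) A w)"
proof -
  let ?L = "\<lambda>p q. lie_br N (mat_mult N (b p) (b q))"
  let ?D = "\<lambda>p q. dderiv (b p) (dderiv (b q) F) A w"
  have "(\<Sum>i<n. act_factor N i (mat_mult N (b p) (b q)) (dderiv (b p) (dderiv (b q) F) A) w)
      = dderiv (b p) (dderiv (b q) (dderiv (?L p q A) F)) A w
        + dderiv (b q) (dderiv (?L p q (b p)) F) A w + dderiv (b p) (dderiv (?L p q (b q)) F) A w
        + (if p = q then of_nat n / of_nat N * ?D p q else 0)"
    if "p \<in> {..<dim_sl N}" and "q \<in> {..<dim_sl N}" for p q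
    using that basis_orthonormal
      gl_invariance_dderiv2[OF in_gl_mat_mult[OF basis_in_gl basis_in_gl] A basis_in_sl basis_in_sl w]
    by (simp add: coord_def)
  then have "(\<Sum>p<dim_sl N. \<Sum>q<dim_sl N. \<Sum>i<n.
      act_factor N i (mat_mult N (b p) (b q)) (dderiv (b p) (dderiv (b q) F) A) w)
    = (\<Sum>p<dim_sl N. \<Sum>q<dim_sl N. dderiv (b p) (dderiv (b q) (dderiv (?L p q A) F)) A w
        + dderiv (b q) (dderiv (?L p q (b p)) F) A w + dderiv (b p) (dderiv (?L p q (b q)) F) A w
        + (if p = q then of_nat n / of_nat N * ?D p q else 0))"
    by (intro sum.cong refl) simp
  also have "\<dots> = (\<Sum>p<dim_sl N. \<Sum>q<dim_sl N. dderiv (b p) (dderiv (b q) (dderiv (?L p q A) F)) A w)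
      + (\<Sum>p<dim_sl N. \<Sum>q<dim_sl N. dderiv (b q) (dderiv (?L p q (b p)) F) A w)
      + (\<Sum>p<dim_sl N. \<Sum>q<dim_sl N. dderiv (b p) (dderiv (?L p q (b q)) F) A w)
      + (\<Sum>p<dim_sl N. of_nat n / of_nat N * ?D p p)"
    by (simp add: sum.distrib if_distrib[of "\<lambda>x. _ * x"] cong: if_cong)
  also have "\<dots> = of_nat n / of_nat N * (\<Sum>p<dim_sl N. ?D p p)"
  proof -
    have "(\<Sum>p<dim_sl N. dderiv (b q) (dderiv (?L p q (b p)) F) A w) = - of_nat N * ?D q q"
      if "q < dim_sl N" for q
      by (rule sum_dderiv2_by_dir_sum[OF poly_field_F _ sum_lie_br_basis_product_left[OF that]]) simp
    then have "(\<Sum>p<dim_sl N. \<Sum>q<dim_sl N. dderiv (b q) (dderiv (?L p q (b p)) F) A w)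
        = - of_nat N * (\<Sum>q<dim_sl N. ?D q q)"
      by (subst sum.swap) (simp add: sum_distrib_left)
    moreover have "(\<Sum>q<dim_sl N. dderiv (b p) (dderiv (?L p q (b q)) F) A w) = of_nat N * ?D p p"
      if "p < dim_sl N" for p
      by (rule sum_dderiv2_by_dir_sum[OF poly_field_F _ sum_lie_br_basis_product_right[OF that]]) simp
    ultimately show ?thesis
      by (simp add: sum_dderiv3_lie_br_basis_eq_0 in_sl_imp_in_gl[OF A] sum_distrib_left sum_negf)
  qed
  finally show ?thesis .
qed

lemma ebold_eq:
  assumes A: "in_sl N A" and w: "valid_idx N n w"
  shows "ebold N n b F A w = (of_nat N / of_nat n) * Eop N b F A w"
proof -
  let ?T = "\<lambda>p q i. act_factor N i (mat_mult N (b p) (b q)) (dderiv (b p) (dderiv (b q) F) A) w"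
  have swap: "(\<Sum>i<n. \<Sum>p<dim_sl N. \<Sum>q<dim_sl N. ?T p q i)
      = (\<Sum>p<dim_sl N. \<Sum>q<dim_sl N. \<Sum>i<n. ?T p q i)"
    by (subst sum.swap) (intro sum.cong refl sum.swap)
  have "ebold N n b F A w
      = 1 / 2 * (\<Sum>i<n. (of_nat N / of_nat n)\<^sup>2 * (\<Sum>p<dim_sl N. \<Sum>q<dim_sl N. ?T p q i))"
    unfolding ebold_def using w by (simp add: yop_yop valid_idx_nth)
  also have "\<dots> = 1 / 2 * (of_nat N / of_nat n)\<^sup>2
      * (of_nat n / of_nat N * (\<Sum>p<dim_sl N. dderiv (b p) (dderiv (b p) F) A w))"
    by (simp add: sum_distrib_left[symmetric] swap sum_act_basis_products[OF A w])
  also have "\<dots> = (of_nat N / of_nat n) * Eop N b F A w"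
    using n_pos of_nat_N_neq_0 by (simp add: Eop_def power2_eq_square field_simps)
  finally show ?thesis .
qed

end

theorem mainTheorem14:
  fixes N n :: nat and b :: "nat \<Rightarrow> mat" and F :: "mat \<Rightarrow> tens"
  assumes "N dvd n" and "0 < n" and "onb N b" and "F \<in> V N n"
  shows "\<forall>A w. in_sl N A \<longrightarrow> valid_idx N n w \<longrightarrow>
           hbold N n b F A w = Hop N b F A w
         \<and> ebold N n b F A w = (of_nat N / of_nat n) * Eop N b F A w
         \<and> fbold N n F A w = (of_nat n / of_nat N) * Fop N b F A w"
proof -
  have "0 < N"
    using assms(1,2) by (auto intro!: Nat.gr0I)
  then interpret V_element N b n F
    using assms by unfold_locales
  show ?thesis
    using hbold_eq ebold_eq fbold_eq by blast
qed

end
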